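(* Let $p$ be an odd prime, $s\ge1$, and $r\ge3$ an integer dividing $\frac{p^s\pm1}2$ (for a fixed choice of sign $\pm$). Let $\lambda=e^{2\pi i/(2r)}$ and $\eta=-\frac{(\lambda-\lambda^{-1})}{\sqrt{2r}}\,i$ with $\sqrt{2r}>0$. Then $$\eta^{p^s}\equiv\mp\left(\frac{-2r}{p}\right)^{s}\eta\pmod p,$$ where the sign $\mp$ is opposite to the sign $\pm$ in the hypothesis.
   Context: $\left(\frac{-2r}{p}\right)$ is the Legendre symbol. The congruence means the difference is $p$ times an element of the ring of algebraic integers with $2r$ inverted. *)

theory Defs
  imports "HOL-Complex_Analysis.Complex_Analysis" "HOL-Computational_Algebra.Polynomial"
    "HOL-Number_Theory.Number_Theory"
begin

definition alg_int_inv :: "nat \<Rightarrow> complex \<Rightarrow> bool" where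
  "alg_int_inv m x \<longleftrightarrow> (\<exists>y n. algebraic_int y \<and> x = y / (of_nat m) ^ n)"

definition cong_alg_inv :: "nat \<Rightarrow> complex \<Rightarrow> complex \<Rightarrow> complex \<Rightarrow> bool" where
  "cong_alg_inv m p a b \<longleftrightarrow> (\<exists>x. alg_int_inv m x \<and> a - b = p * x)"

end

theory Submission
  imports Defs "Jordan_Normal_Form.Char_Poly"
begin

text \<open>
  Put sigma = -i (lam - 1/lam), so that eta = sigma / sqrt (2r). The numbers lam, 1/lam and i are
  powers of z = exp (pi i / (2r)), hence eigenvalues of integer matrices with the common
  eigenvector (1, z, ..., z^(4r-1)). Such eigenvalues form a ring of algebraic integers, and in it
  the Frobenius congruence together with p^s = -eps (mod 2r) gives
  sigma^(p^s) = (-i lam)^(p^s) + (i/lam)^(p^s) = -eps (-1)^m sigma (mod p), where m = (p^s - 1)/2.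
  Iterating Euler's criterion gives (-1)^m = (-2r/p)^s (2r)^m (mod p). Finally one divides by
  sqrt (2r)^(p^s) = (2r)^m sqrt (2r): a difference p w with w in the ring becomes
  p (sqrt (2r) w) / (2r)^(m+1), and sqrt (2r) w is an algebraic integer because its square 2r w^2 is.
\<close>

lemma algebraic_int_of_power:
  assumes "algebraic_int (x ^ k)" "k > 0"
  shows "algebraic_int x"
  by (rule algebraic_int_root[OF assms(1), where p = "Polynomial.monom 1 k"])
    (use assms(2) in \<open>auto simp: poly_monom degree_monom_eq coeff_monom\<close>)

definition int_eigen_ring :: "complex vec \<Rightarrow> complex set" where
  "int_eigen_ring v =
    {x. \<exists>B \<in> carrier_mat (dim_vec v) (dim_vec v). map_mat of_int B *\<^sub>v v = x \<cdot>\<^sub>v v}"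

lemma int_eigen_ringE:
  assumes "x \<in> int_eigen_ring v"
  obtains B where "B \<in> carrier_mat (dim_vec v) (dim_vec v)" "map_mat of_int B *\<^sub>v v = x \<cdot>\<^sub>v v"
  using assms by (auto simp: int_eigen_ring_def)

lemma int_eigen_ring_imp_algebraic_int:
  assumes "x \<in> int_eigen_ring v" and "v \<noteq> 0\<^sub>v (dim_vec v)"
  shows "algebraic_int x"
proof -
  obtain B where B: "B \<in> carrier_mat (dim_vec v) (dim_vec v)" "map_mat of_int B *\<^sub>v v = x \<cdot>\<^sub>v v"
    using assms(1) by (rule int_eigen_ringE)
  let ?A = "map_mat (of_int :: int \<Rightarrow> complex) B"
  have A: "?A \<in> carrier_mat (dim_vec v) (dim_vec v)" using B by simp
  have "eigenvalue ?A x" unfolding eigenvalue_def eigenvector_def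
    using A B assms(2) by (intro exI[of _ v]) auto
  hence "poly (char_poly ?A) x = 0" using eigenvalue_root_char_poly[OF A] by simp
  hence "poly (map_poly of_int (char_poly B)) x = 0"
    using of_int_hom.char_poly_hom[OF B(1)] by metis
  moreover have "lead_coeff (char_poly B) = 1" using degree_monic_char_poly[OF B(1)] by simp
  ultimately show ?thesis unfolding algebraic_int_altdef_ipoly by blast
qed

lemma of_int_in_int_eigen_ring [intro]: "of_int k \<in> int_eigen_ring v"
proof -
  have "map_mat of_int (k \<cdot>\<^sub>m 1\<^sub>m (dim_vec v)) *\<^sub>v v = (of_int k :: complex) \<cdot>\<^sub>v v"
    by (rule eq_vecI)
      (auto simp: scalar_prod_def Int_def Collect_conv_if mult.assoc simp flip: of_bool_def sum_distrib_left)
  thus ?thesis unfolding int_eigen_ring_def by (intro CollectI bexI[of _ "k \<cdot>\<^sub>m 1\<^sub>m (dim_vec v)"]) auto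
qed

lemma of_nat_in_int_eigen_ring [intro]: "of_nat k \<in> int_eigen_ring v"
  using of_int_in_int_eigen_ring[of "int k" v] by simp

lemma int_eigen_ring_add [intro]:
  assumes "x \<in> int_eigen_ring v" "y \<in> int_eigen_ring v"
  shows "x + y \<in> int_eigen_ring v"
proof -
  obtain A where A: "A \<in> carrier_mat (dim_vec v) (dim_vec v)" "map_mat of_int A *\<^sub>v v = x \<cdot>\<^sub>v v"
    using assms(1) by (rule int_eigen_ringE)
  obtain B where B: "B \<in> carrier_mat (dim_vec v) (dim_vec v)" "map_mat of_int B *\<^sub>v v = y \<cdot>\<^sub>v v"
    using assms(2) by (rule int_eigen_ringE)
  have "map_mat of_int (A + B) = map_mat of_int A + (map_mat of_int B :: complex mat)"
    using A B by (intro eq_matI) auto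
  hence "map_mat of_int (A + B) *\<^sub>v v = (x + y) \<cdot>\<^sub>v v"
    using A B by (simp add: add_mult_distrib_mat_vec add_smult_distrib_vec)
  thus ?thesis unfolding int_eigen_ring_def using A B by auto
qed

lemma int_eigen_ring_mult [intro]:
  assumes "x \<in> int_eigen_ring v" "y \<in> int_eigen_ring v"
  shows "x * y \<in> int_eigen_ring v"
proof -
  obtain A where A: "A \<in> carrier_mat (dim_vec v) (dim_vec v)" "map_mat of_int A *\<^sub>v v = x \<cdot>\<^sub>v v"
    using assms(1) by (rule int_eigen_ringE)
  obtain B where B: "B \<in> carrier_mat (dim_vec v) (dim_vec v)" "map_mat of_int B *\<^sub>v v = y \<cdot>\<^sub>v v"
    using assms(2) by (rule int_eigen_ringE)
  have "map_mat of_int (B * A) *\<^sub>v v = map_mat of_int B *\<^sub>v (map_mat of_int A *\<^sub>v v)"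
    using A B by (simp add: of_int_hom.mat_hom_mult assoc_mult_mat_vec)
  also have "\<dots> = (x * y) \<cdot>\<^sub>v v"
    using A B by (simp add: mult_mat_vec smult_smult_assoc)
  finally show ?thesis unfolding int_eigen_ring_def using A B by auto
qed

lemma int_eigen_ring_uminus [intro]: "x \<in> int_eigen_ring v \<Longrightarrow> - x \<in> int_eigen_ring v"
  using int_eigen_ring_mult[OF of_int_in_int_eigen_ring[of "-1"]] by simp

lemma int_eigen_ring_diff [intro]:
  "x \<in> int_eigen_ring v \<Longrightarrow> y \<in> int_eigen_ring v \<Longrightarrow> x - y \<in> int_eigen_ring v"
  using int_eigen_ring_add[OF _ int_eigen_ring_uminus, of x v y] by simp

lemma int_eigen_ring_power [intro]: "x \<in> int_eigen_ring v \<Longrightarrow> x ^ k \<in> int_eigen_ring v"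
  using of_nat_in_int_eigen_ring[of 1 v] by (induction k) (simp_all add: int_eigen_ring_mult)

lemma int_eigen_ring_sum [intro]:
  "(\<And>i. i \<in> A \<Longrightarrow> f i \<in> int_eigen_ring v) \<Longrightarrow> (\<Sum>i\<in>A. f i) \<in> int_eigen_ring v"
  using of_nat_in_int_eigen_ring[of 0 v]
  by (induction A rule: infinite_finite_induct) (simp_all add: int_eigen_ring_add)

definition powers_vec :: "nat \<Rightarrow> 'a::monoid_mult \<Rightarrow> 'a vec" where
  "powers_vec n z = vec n (\<lambda>j. z ^ j)"

lemma powers_vec_nonzero:
  fixes z :: "'a::{monoid_mult, zero_neq_one}"
  assumes "n > 0"
  shows "powers_vec n z \<noteq> 0\<^sub>v (dim_vec (powers_vec n z))"
proof
  assume "powers_vec n z = 0\<^sub>v (dim_vec (powers_vec n z))"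
  hence "powers_vec n z $ 0 = 0" using assms by (simp add: powers_vec_def)
  thus False using assms by (simp add: powers_vec_def)
qed

lemma power_mod_root_of_unity:
  fixes z :: "'a::monoid_mult"
  assumes "z ^ n = 1"
  shows "z ^ (k mod n) = z ^ k"
proof -
  have "z ^ k = (z ^ n) ^ (k div n) * z ^ (k mod n)"
    by (simp only: power_mult [symmetric] power_add [symmetric] mult_div_mod_eq)
  thus ?thesis using assms by simp
qed

text \<open>The witness is the cyclic shift matrix, which maps (z^j) to (z^((j + 1) mod n)).\<close>
lemma root_of_unity_in_int_eigen_ring:
  assumes "z ^ n = 1"
  shows "z \<in> int_eigen_ring (powers_vec n z)"
proof -
  define C :: "int mat" where "C = mat n n (\<lambda>(i, j). if j = Suc i mod n then 1 else 0)"
  have "map_mat of_int C *\<^sub>v powers_vec n z = z \<cdot>\<^sub>v powers_vec n z"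
  proof (rule eq_vecI)
    fix i assume "i < dim_vec (z \<cdot>\<^sub>v powers_vec n z)"
    hence i: "i < n" by (simp add: powers_vec_def)
    have "(map_mat of_int C *\<^sub>v powers_vec n z) $ i = z ^ (Suc i mod n)"
      using i by (simp add: C_def powers_vec_def scalar_prod_def atLeast0LessThan Int_def Collect_conv_if
          flip: of_bool_def)
    also have "\<dots> = z ^ Suc i"
      by (rule power_mod_root_of_unity[OF assms])
    finally show "(map_mat of_int C *\<^sub>v powers_vec n z) $ i = (z \<cdot>\<^sub>v powers_vec n z) $ i"
      using i by (simp add: powers_vec_def)
  qed (simp add: C_def powers_vec_def)
  thus ?thesis unfolding int_eigen_ring_def by (auto simp: C_def powers_vec_def)
qed

lemma int_eigen_ring_with_root_and_ii:
  assumes "r > 0" "lam = exp (2 * of_real pi * \<i> / (2 * of_nat r))"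
  obtains v where "v \<noteq> 0\<^sub>v (dim_vec v)" "lam ^ (2 * r) = 1" "lam \<in> int_eigen_ring v"
    "inverse lam \<in> int_eigen_ring v" "\<i> \<in> int_eigen_ring v"
proof
  define z where "z = exp (of_real pi * \<i> / (2 * of_nat r))"
  have z_pow: "z ^ k = exp (of_nat k * (of_real pi * \<i> / (2 * of_nat r)))" for k
    unfolding z_def by (rule exp_of_nat_mult [symmetric])
  have z_2: "z ^ 2 = lam" unfolding z_pow assms(2) by (simp add: field_simps)
  have "z ^ r = cis (pi / 2)" unfolding z_pow cis_conv_exp using assms(1) by (simp add: field_simps)
  hence z_r: "z ^ r = \<i>" by simp
  hence z_4r: "z ^ (4 * r) = 1" by (simp add: power_mult mult.commute [of 4])
  define v where "v = powers_vec (4 * r) z"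
  have z_in: "z \<in> int_eigen_ring v" unfolding v_def by (rule root_of_unity_in_int_eigen_ring[OF z_4r])
  show "v \<noteq> 0\<^sub>v (dim_vec v)" unfolding v_def using assms(1) by (intro powers_vec_nonzero) simp
  show "lam ^ (2 * r) = 1" using z_4r by (simp flip: z_2 power_mult)
  show "lam \<in> int_eigen_ring v" "\<i> \<in> int_eigen_ring v"
    using int_eigen_ring_power[OF z_in] by (simp_all flip: z_2 z_r)
  have "lam * z ^ (4 * r - 2) = z ^ (2 + (4 * r - 2))" unfolding power_add z_2 ..
  also have "2 + (4 * r - 2) = 4 * r" using assms(1) by simp
  finally have "inverse lam = z ^ (4 * r - 2)" using z_4r by (simp add: inverse_unique)
  thus "inverse lam \<in> int_eigen_ring v" using int_eigen_ring_power[OF z_in] by simp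
qed

definition int_eigen_cong :: "complex vec \<Rightarrow> nat \<Rightarrow> complex \<Rightarrow> complex \<Rightarrow> bool" where
  "int_eigen_cong v p a b \<longleftrightarrow> (\<exists>w \<in> int_eigen_ring v. a - b = of_nat p * w)"

lemma int_eigen_cong_refl: "int_eigen_cong v p a a"
  unfolding int_eigen_cong_def using of_nat_in_int_eigen_ring[of 0] by force

lemma int_eigen_cong_trans [trans]:
  assumes "int_eigen_cong v p a b" "int_eigen_cong v p b c"
  shows "int_eigen_cong v p a c"
proof -
  obtain w1 w2 where "w1 \<in> int_eigen_ring v" "a - b = of_nat p * w1"
    and "w2 \<in> int_eigen_ring v" "b - c = of_nat p * w2"
    using assms unfolding int_eigen_cong_def by blast
  moreover have "a - c = of_nat p * (w1 + w2)" using calculation by (simp add: algebra_simps)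
  ultimately show ?thesis unfolding int_eigen_cong_def by blast
qed

lemma int_eigen_cong_mult:
  assumes "int_eigen_cong v p a b" "int_eigen_cong v p c d"
    and "a \<in> int_eigen_ring v" "d \<in> int_eigen_ring v"
  shows "int_eigen_cong v p (a * c) (b * d)"
proof -
  obtain w1 w2 where "w1 \<in> int_eigen_ring v" "a - b = of_nat p * w1"
    and "w2 \<in> int_eigen_ring v" "c - d = of_nat p * w2"
    using assms(1,2) unfolding int_eigen_cong_def by blast
  moreover have "a * c - b * d = a * (c - d) + (a - b) * d" by (simp add: algebra_simps)
  ultimately have "a * c - b * d = of_nat p * (a * w2 + w1 * d)" by (simp add: algebra_simps)
  thus ?thesis unfolding int_eigen_cong_def using assms(3,4) \<open>w1 \<in> _\<close> \<open>w2 \<in> _\<close> by blast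
qed

lemma int_eigen_cong_power:
  assumes "int_eigen_cong v p a b" "a \<in> int_eigen_ring v" "b \<in> int_eigen_ring v"
  shows "int_eigen_cong v p (a ^ k) (b ^ k)"
proof (induction k)
  case (Suc k)
  show ?case unfolding power_Suc using Suc assms by (intro int_eigen_cong_mult int_eigen_ring_power)
qed (simp add: int_eigen_cong_refl)

lemma int_eigen_cong_of_int:
  assumes "[k = l] (mod int p)" "x \<in> int_eigen_ring v"
  shows "int_eigen_cong v p (of_int k * x) (of_int l * x)"
proof -
  obtain t where "k - l = int p * t" using assms(1) unfolding cong_iff_dvd_diff by (rule dvdE)
  have "of_int k * x - of_int l * x = of_int (k - l) * x" by (simp add: algebra_simps)
  also have "\<dots> = of_nat p * (of_int t * x)" using \<open>k - l = int p * t\<close> by simp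
  finally show ?thesis unfolding int_eigen_cong_def using assms(2) by blast
qed

lemma int_eigen_cong_add_power_prime:
  assumes "prime p" "a \<in> int_eigen_ring v" "b \<in> int_eigen_ring v"
  shows "int_eigen_cong v p ((a + b) ^ p) (a ^ p + b ^ p)"
proof -
  define f where "f k = of_nat (p choose k) * a ^ k * b ^ (p - k)" for k
  have "p \<noteq> 0" using assms(1) by auto
  have "{..p} = {0, p} \<union> {1..<p}" using \<open>p \<noteq> 0\<close> by auto
  hence "(a + b) ^ p = (\<Sum>k\<in>{0, p} \<union> {1..<p}. f k)" by (simp add: binomial_ring f_def)
  also have "\<dots> = (\<Sum>k\<in>{0, p}. f k) + (\<Sum>k\<in>{1..<p}. f k)" by (rule sum.union_disjoint) auto
  also have "(\<Sum>k\<in>{0, p}. f k) = a ^ p + b ^ p" using \<open>p \<noteq> 0\<close> by (simp add: f_def)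
  finally have "(a + b) ^ p - (a ^ p + b ^ p) = (\<Sum>k\<in>{1..<p}. f k)" by simp
  also have "\<dots> = of_nat p * (\<Sum>k\<in>{1..<p}. of_nat ((p choose k) div p) * a ^ k * b ^ (p - k))"
    unfolding sum_distrib_left f_def
  proof (rule sum.cong)
    fix k assume "k \<in> {1..<p}"
    hence "p dvd (p choose k)" using assms(1) by (intro dvd_choose_prime) auto
    thus "of_nat (p choose k) * a ^ k * b ^ (p - k) =
        of_nat p * (of_nat ((p choose k) div p) * a ^ k * b ^ (p - k))"
      by (simp flip: of_nat_mult mult.assoc)
  qed simp
  finally show ?thesis unfolding int_eigen_cong_def using assms(2,3) by blast
qed

lemma int_eigen_cong_add_power_prime_power:
  assumes "prime p" "a \<in> int_eigen_ring v" "b \<in> int_eigen_ring v"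
  shows "int_eigen_cong v p ((a + b) ^ (p ^ s)) (a ^ (p ^ s) + b ^ (p ^ s))"
proof (induction s)
  case 0
  show ?case by (simp add: int_eigen_cong_refl)
next
  case (Suc s)
  have "int_eigen_cong v p (((a + b) ^ p ^ s) ^ p) ((a ^ p ^ s + b ^ p ^ s) ^ p)"
    using Suc assms by (intro int_eigen_cong_power) auto
  also have "int_eigen_cong v p \<dots> ((a ^ p ^ s) ^ p + (b ^ p ^ s) ^ p)"
    using assms by (intro int_eigen_cong_add_power_prime) auto
  finally show ?case by (simp only: power_Suc2 power_mult)
qed

lemma Legendre_power_odd: "odd k \<Longrightarrow> Legendre a p ^ k = Legendre a p"
  by (auto simp: Legendre_def odd_pos)

lemma Legendre_power_eq_1: "\<not> p dvd a \<Longrightarrow> Legendre a p ^ (2 * s) = 1"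
  by (simp add: Legendre_def cong_0_iff power_mult)

lemma euler_criterion_power:
  assumes "prime p" "2 < p"
  shows "[a ^ ((p ^ s - 1) div 2) = Legendre a (int p) ^ s] (mod int p)"
proof (induction s)
  case (Suc s)
  have "odd p" using assms by (simp add: prime_odd_nat)
  have "(p * q - 1) div 2 = (p - 1) div 2 + p * ((q - 1) div 2)" if "odd q" for q
    using \<open>odd p\<close> that by (auto elim!: oddE simp: algebra_simps)
  from this[of "p ^ s"] \<open>odd p\<close>
  have "a ^ ((p ^ Suc s - 1) div 2) = a ^ ((p - 1) div 2) * (a ^ ((p ^ s - 1) div 2)) ^ p"
    by (simp add: power_add mult.commute [of p] flip: power_mult)
  also have "[\<dots> = Legendre a p * (Legendre a p ^ s) ^ p] (mod int p)"
    using euler_criterion[OF assms, of a] Suc by (intro cong_mult cong_pow) (auto simp: cong_sym)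
  also have "Legendre a p * (Legendre a p ^ s) ^ p = Legendre a p ^ Suc s"
    using \<open>odd p\<close>
    by (simp add: power_mult [symmetric] mult.commute [of s] power_mult Legendre_power_odd)
  finally show ?case .
qed simp

lemma Legendre_power_mult_power_cong:
  assumes "prime p" "2 < p" "\<not> int p dvd a"
  shows "[Legendre (- a) p ^ s * a ^ ((p ^ s - 1) div 2) = (-1) ^ ((p ^ s - 1) div 2)] (mod int p)"
proof -
  define m L where "m = (p ^ s - 1) div 2" and "L = Legendre (- a) p"
  have "L ^ s * a ^ m = ((-1) * (-1)) ^ m * (L ^ s * a ^ m)" by simp
  also have "\<dots> = (-1) ^ m * (L ^ s * (- a) ^ m)"
    by (simp only: power_minus [of a m] power_mult_distrib mult_ac)
  also have "[\<dots> = (-1) ^ m * (L ^ s * L ^ s)] (mod int p)"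
    using euler_criterion_power[OF assms(1,2), of "- a" s] unfolding m_def L_def
    by (intro cong_scalar_left)
  also have "L ^ s * L ^ s = 1"
    using Legendre_power_eq_1[of p "- a" s] assms(3) unfolding L_def by (simp add: mult_2 power_add)
  finally show ?thesis unfolding m_def L_def by simp
qed

lemma prime_not_dvd_divisor_of_power_add_unit:
  assumes "prime p" "s \<ge> 1" "eps \<in> {1, -1}" "d dvd int p ^ s + eps"
  shows "\<not> int p dvd d"
proof
  assume "int p dvd d"
  hence "int p dvd int p ^ s + eps" using assms(4) by (rule dvd_trans)
  moreover have "int p dvd int p ^ s" using assms(2) by (simp add: dvd_power)
  ultimately have "int p dvd eps" by (simp add: dvd_add_right_iff)
  thus False using assms(1,3) by auto
qed

lemma cong_alg_inv_divide_sqrt_power: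
  assumes "int_eigen_cong v p (x ^ N) (of_nat n ^ ((N - 1) div 2) * y)" "odd N"
    and "v \<noteq> 0\<^sub>v (dim_vec v)" "S ^ 2 = of_nat n" "n > 0"
  shows "cong_alg_inv n (of_nat p) ((x / S) ^ N) (y / S)"
proof -
  obtain m where N: "N = 2 * m + 1" using assms(2) by (rule oddE)
  obtain w where w: "w \<in> int_eigen_ring v" "x ^ N - of_nat n ^ m * y = of_nat p * w"
    using assms(1) N unfolding int_eigen_cong_def by auto
  have "S \<noteq> 0" using assms(4,5) by auto
  have "of_nat n * w ^ 2 \<in> int_eigen_ring v"
    using w(1) by (intro int_eigen_ring_mult int_eigen_ring_power of_nat_in_int_eigen_ring)
  moreover have "(S * w) ^ 2 = of_nat n * w ^ 2" using assms(4) by (simp add: power_mult_distrib)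
  ultimately have "algebraic_int ((S * w) ^ 2)" using int_eigen_ring_imp_algebraic_int assms(3) by simp
  hence "algebraic_int (S * w)" by (rule algebraic_int_of_power) simp
  hence "alg_int_inv n (S * w / of_nat n ^ (m + 1))" unfolding alg_int_inv_def by blast
  moreover have "S ^ N = of_nat n ^ m * S" using assms(4) N by (simp add: power_mult)
  hence "(x / S) ^ N - y / S = of_nat p * (S * w / of_nat n ^ (m + 1))"
    using w(2) \<open>S \<noteq> 0\<close> assms(4,5) by (simp add: field_simps power_divide power2_eq_square)
  ultimately show ?thesis unfolding cong_alg_inv_def by blast
qed

lemma ii_diff_inverse_power_odd:
  fixes lam :: complex
  assumes "lam ^ n = 1" "int n dvd int N + eps" "eps \<in> {1, -1}" "odd N"
  shows "(- \<i> * lam) ^ N + (\<i> * inverse lam) ^ N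
    = of_int (- eps * (-1) ^ ((N - 1) div 2)) * (- \<i> * (lam - inverse lam))"
proof -
  obtain k where N: "N = 2 * k + 1" using assms(4) by (rule oddE)
  have ii_N: "\<i> ^ N = (-1) ^ k * \<i>" unfolding N by (simp add: power_mult)
  have lam_N: "lam ^ N - inverse lam ^ N = - of_int eps * (lam - inverse lam)"
  proof (cases "eps = 1")
    case True
    hence "n dvd N + 1" using assms(2) by (simp add: add.commute flip: int_dvd_int_iff)
    hence "lam * lam ^ N = 1" using power_mod_root_of_unity[OF assms(1), of "N + 1"] by simp
    hence "lam ^ N = inverse lam" by (simp add: inverse_unique)
    thus ?thesis using True by (simp add: power_inverse)
  next
    case False
    hence "eps = -1" using assms(3) by simp
    hence "n dvd 2 * k" using assms(2) N by (simp flip: int_dvd_int_iff)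
    hence "lam ^ N = lam" using power_mod_root_of_unity[OF assms(1), of "2 * k"] N by simp
    thus ?thesis using \<open>eps = -1\<close> by (simp add: power_inverse)
  qed
  have "(- \<i> * lam) ^ N + (\<i> * inverse lam) ^ N = - (\<i> ^ N * (lam ^ N - inverse lam ^ N))"
    using assms(4) by (simp add: power_mult_distrib algebra_simps)
  also have "\<dots> = - ((-1) ^ k * \<i> * (- of_int eps * (lam - inverse lam)))"
    unfolding ii_N lam_N ..
  also have "\<dots> = of_int (- eps * (-1) ^ ((N - 1) div 2)) * (- \<i> * (lam - inverse lam))"
    using N by (simp add: algebra_simps)
  finally show ?thesis .
qed

lemma int_eigen_cong_ii_diff_inverse_power:
  assumes "prime p" "odd p" "lam ^ n = 1" "int n dvd int (p ^ s) + eps" "eps \<in> {1, -1}"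
    and "lam \<in> int_eigen_ring v" "inverse lam \<in> int_eigen_ring v" "\<i> \<in> int_eigen_ring v"
  shows "int_eigen_cong v p ((- \<i> * (lam - inverse lam)) ^ p ^ s)
    (of_int (- eps * (-1) ^ ((p ^ s - 1) div 2)) * (- \<i> * (lam - inverse lam)))"
proof -
  have "- \<i> * (lam - inverse lam) = - \<i> * lam + \<i> * inverse lam" by (simp add: algebra_simps)
  moreover have "int_eigen_cong v p ((- \<i> * lam + \<i> * inverse lam) ^ p ^ s)
      ((- \<i> * lam) ^ p ^ s + (\<i> * inverse lam) ^ p ^ s)"
    using assms by (intro int_eigen_cong_add_power_prime_power) auto
  ultimately show ?thesis using ii_diff_inverse_power_odd[OF assms(3,4,5)] assms(2) by simp
qed

lemma int_eigen_cong_ii_diff_inverse_power_Legendre: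
  assumes "prime p" "odd p" "s \<ge> 1" "lam ^ n = 1" "int n dvd int (p ^ s) + eps" "eps \<in> {1, -1}"
    and "lam \<in> int_eigen_ring v" "inverse lam \<in> int_eigen_ring v" "\<i> \<in> int_eigen_ring v"
  shows "int_eigen_cong v p ((- \<i> * (lam - inverse lam)) ^ p ^ s)
    (of_nat n ^ ((p ^ s - 1) div 2) *
      (- of_int (eps * Legendre (- int n) p ^ s) * (- \<i> * (lam - inverse lam))))"
proof -
  define m L \<sigma> where "m = (p ^ s - 1) div 2" and "L = Legendre (- int n) p"
    and "\<sigma> = - \<i> * (lam - inverse lam)"
  have "2 < p" using prime_ge_2_nat[OF assms(1)] assms(2) by (cases "p = 2") auto
  have "\<not> int p dvd int n"
    using prime_not_dvd_divisor_of_power_add_unit[OF assms(1,3,6), of "int n"] assms(5) by simp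
  hence "[- eps * (-1) ^ m = - eps * (L ^ s * int n ^ m)] (mod int p)"
    using Legendre_power_mult_power_cong[OF assms(1) \<open>2 < p\<close>, of "int n" s]
    unfolding m_def L_def by (intro cong_scalar_left) (simp add: cong_sym)
  hence "int_eigen_cong v p (of_int (- eps * (-1) ^ m) * \<sigma>)
      (of_int (- eps * (L ^ s * int n ^ m)) * \<sigma>)"
    unfolding \<sigma>_def using assms(7-9) by (intro int_eigen_cong_of_int) auto
  with int_eigen_cong_ii_diff_inverse_power[OF assms(1,2,4-9)]
  have "int_eigen_cong v p (\<sigma> ^ p ^ s) (of_int (- eps * (L ^ s * int n ^ m)) * \<sigma>)"
    unfolding \<sigma>_def m_def by (rule int_eigen_cong_trans)
  also have "of_int (- eps * (L ^ s * int n ^ m)) * \<sigma> = of_nat n ^ m * (- of_int (eps * L ^ s) * \<sigma>)"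
    by simp
  finally show ?thesis unfolding m_def L_def \<sigma>_def .
qed

theorem lemma7:
  fixes p s r :: nat and eps :: int and lam eta :: complex
  assumes "prime p" and "odd p" and "s \<ge> 1" and "r \<ge> 3"
    and "eps \<in> {1, -1}"
    and "int r dvd (int p ^ s + eps) div 2"
    and "lam = exp (2 * of_real pi * \<i> / (2 * of_nat r))"
    and "eta = - ((lam - inverse lam) / of_real (sqrt (2 * real r))) * \<i>"
  shows "cong_alg_inv (2 * r) (of_nat p) (eta ^ (p ^ s))
           (- of_int (eps * Legendre (- 2 * int r) (int p) ^ s) * eta)"
proof -
  define L S \<sigma> where "L = Legendre (- 2 * int r) (int p)"
    and "S = complex_of_real (sqrt (2 * real r))" and "\<sigma> = - \<i> * (lam - inverse lam)"
  obtain v where v: "v \<noteq> 0\<^sub>v (dim_vec v)" "lam ^ (2 * r) = 1" "lam \<in> int_eigen_ring v"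
    "inverse lam \<in> int_eigen_ring v" "\<i> \<in> int_eigen_ring v"
    using int_eigen_ring_with_root_and_ii[OF _ assms(7)] assms(4) by auto
  have "even (int p ^ s + eps)" using assms(2,5) by auto
  then obtain q where "int p ^ s + eps = 2 * q" by (rule evenE)
  hence "int (2 * r) dvd int (p ^ s) + eps" using assms(6) by (simp add: mult_dvd_mono)
  from int_eigen_cong_ii_diff_inverse_power_Legendre[OF assms(1-3) v(2) this assms(5) v(3-5)]
  have "int_eigen_cong v p (\<sigma> ^ p ^ s)
      (of_nat (2 * r) ^ ((p ^ s - 1) div 2) * (- of_int (eps * L ^ s) * \<sigma>))"
    unfolding \<sigma>_def L_def by simp
  moreover have "S ^ 2 = of_nat (2 * r)" unfolding S_def by (simp flip: of_real_power)
  ultimately have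
    "cong_alg_inv (2 * r) (of_nat p) ((\<sigma> / S) ^ p ^ s) (- of_int (eps * L ^ s) * \<sigma> / S)"
    using assms(2,4) by (intro cong_alg_inv_divide_sqrt_power[OF _ _ v(1)]) auto
  moreover have "\<sigma> / S = eta"
    unfolding assms(8) \<sigma>_def S_def by (simp add: algebra_simps minus_divide_left)
  ultimately show ?thesis unfolding L_def times_divide_eq_right [symmetric] by simp
qed

end
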